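(* Let $p\geq1$. For each $v\in W^{1,p}((0,\infty),\sinh^{N-1}(t))$, \[ |v(t)|\leq p^{\frac1p}\|v\|_{L^p_{\sinh^{N-1}}}^{\frac{p-1}p}\|v'\|_{L^p_{\sinh^{N-1}}}^{\frac1p}\sinh^{\frac{1-N}{p}}(t),\quad\forall t\in(0,\infty). \]
   Context: $W^{1,p}((0,\infty),\sinh^{N-1}(t))$ is the space of functions $v\colon(0,\infty)\to\mathbb R$ with a weak derivative such that $\int_0^\infty(|v|^p+|v'|^p)\sinh^{N-1}(t)\mathrm dt<\infty$; $\|w\|_{L^p_{\sinh^{N-1}}}=\left(\int_0^\infty|w|^p\sinh^{N-1}(t)\mathrm dt\right)^{1/p}$. $v(t)$ refers to the continuous representative. *)

theory Defs
  imports "HOL-Analysis.Analysis"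
begin

definition test_fun :: "(real \<Rightarrow> real) \<Rightarrow> bool" where
  "test_fun \<phi> \<longleftrightarrow>
     (\<forall>k x. ((deriv ^^ k) \<phi>) differentiable (at x)) \<and>
     (\<exists>a b. 0 < a \<and> a \<le> b \<and> (\<forall>t. t \<notin> {a..b} \<longrightarrow> \<phi> t = 0))"

definition loc_int :: "(real \<Rightarrow> real) \<Rightarrow> bool" where
  "loc_int f \<longleftrightarrow> (\<forall>K. compact K \<and> K \<subseteq> {0<..} \<longrightarrow> set_integrable lborel K f)"

definition weak_deriv :: "(real \<Rightarrow> real) \<Rightarrow> (real \<Rightarrow> real) \<Rightarrow> bool" where
  "weak_deriv v w \<longleftrightarrow> loc_int v \<and> loc_int w \<and>
     (\<forall>\<phi>. test_fun \<phi> \<longrightarrow>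
        (LINT t:{0<..}|lborel. v t * deriv \<phi> t) = - (LINT t:{0<..}|lborel. w t * \<phi> t))"

definition Lp_sinh_norm :: "real \<Rightarrow> nat \<Rightarrow> (real \<Rightarrow> real) \<Rightarrow> real" where
  "Lp_sinh_norm p N f = (LINT t:{0<..}|lborel. \<bar>f t\<bar> powr p * sinh t ^ (N - 1)) powr (1 / p)"

definition Lp_sinh :: "real \<Rightarrow> nat \<Rightarrow> (real \<Rightarrow> real) \<Rightarrow> bool" where
  "Lp_sinh p N f \<longleftrightarrow> set_borel_measurable lborel {0<..} f \<and>
     set_integrable lborel {0<..} (\<lambda>t. \<bar>f t\<bar> powr p * sinh t ^ (N - 1))"

definition W1p_sinh :: "real \<Rightarrow> nat \<Rightarrow> (real \<Rightarrow> real) \<Rightarrow> (real \<Rightarrow> real) \<Rightarrow> bool" where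
  "W1p_sinh p N v v' \<longleftrightarrow> Lp_sinh p N v \<and> Lp_sinh p N v' \<and> weak_deriv v v'"

end

theory Submission
  imports Defs "HOL-Real_Asymp.Real_Asymp" "HOL-Computational_Algebra.Polynomial"
begin

text \<open>Testing the weak derivative against smooth approximations of the indicator of
  [a, b] shows that the continuous representative satisfies
  |v b - v a| \<le> \<integral>[a,b] |v'|. A continuity induction upgrades this to the
  integrated chain rule |v t|^p \<le> |v T|^p + p \<integral>[t,T] |v|^(p-1) |v'|.
  As sinh is increasing, the weight sinh^(N-1) is at least sinh^(N-1) t on [t, T], so
  |v t|^p sinh^(N-1) t \<le> |v T|^p sinh^(N-1) t + p \<integral> |v|^(p-1) |v'| sinh^(N-1).
  Since v \<in> L^p there are arbitrarily large T with v T small, and Hoelder's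
  inequality bounds the last integral by the product of norms.\<close>

section \<open>A smooth bump function\<close>

definition bump_q :: "real poly" where
  "bump_q = [:0, 1, -1:]"

lemma poly_bump_q: "poly bump_q x = x * (1 - x)"
  by (simp add: bump_q_def algebra_simps)

lemma poly_pderiv_bump_q: "poly (pderiv bump_q) x = 1 - 2 * x"
  by (simp add: bump_q_def pderiv_pCons algebra_simps)

text \<open>On (0, 1) the k-th derivative of exp (-1/q), q = x (1 - x), is
  P_k / q^(2k) * exp (-1/q), where P_k is given by the recursion below.\<close>

primrec bump_poly :: "nat \<Rightarrow> real poly" where
  "bump_poly 0 = 1"
| "bump_poly (Suc k) = pderiv (bump_poly k) * bump_q^2
     - smult (2 * real k) (bump_q * pderiv bump_q * bump_poly k) + pderiv bump_q * bump_poly k"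

definition bump_deriv :: "nat \<Rightarrow> real \<Rightarrow> real" where
  "bump_deriv k x = (if 0 < x \<and> x < 1
     then poly (bump_poly k) x / (x * (1 - x))^(2*k) * exp (-1 / (x * (1 - x))) else 0)"

abbreviation bump :: "real \<Rightarrow> real" where
  "bump \<equiv> bump_deriv 0"

lemma quotient_exp_derivative_eq:
  fixes Q P P' d E :: real
  assumes "Q \<noteq> 0"
  shows "(P' * Q^(2*k) - P * (real (2*k) * (d * Q^(2*k-1)))) / (Q^(2*k) * Q^(2*k)) * E
           + (E * (d / Q^2)) * (P / Q^(2*k))
         = (P' * Q^2 - (2 * real k) * (Q * d * P) + d * P) / Q^(2 * Suc k) * E"
proof (cases k)
  case 0
  then show ?thesis using assms by (simp add: field_simps power2_eq_square)
next
  case (Suc j)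
  define R where "R = Q^(2*j+1)"
  have "R \<noteq> 0" using assms by (simp add: R_def)
  moreover have "Q^(2*k) = Q*R" "Q^(2*k-1) = R" "Q^(2 * Suc k) = Q*Q*Q*R" "Q^2 = Q*Q"
    by (simp_all add: R_def Suc power2_eq_square)
  ultimately show ?thesis using assms by (simp add: field_simps)
qed

lemma bump_deriv_has_derivative_inside:
  fixes x :: real
  assumes "0 < x" "x < 1"
  shows "((\<lambda>y. poly (bump_poly k) y / (y * (1 - y))^(2*k) * exp (-1 / (y * (1 - y))))
           has_real_derivative bump_deriv (Suc k) x) (at x)"
proof -
  define Q where "Q = x * (1 - x)"
  define E where "E = exp (-1 / (x * (1 - x)))"
  have Q0: "Q \<noteq> 0" using assms by (simp add: Q_def)
  have dq: "((\<lambda>y. y * (1 - y)) has_real_derivative (1 - 2*x)) (at x)"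
    by (auto intro!: derivative_eq_intros simp: algebra_simps)
  have dpow: "((\<lambda>y. (y * (1 - y))^(2*k)) has_real_derivative
                of_nat (2*k) * ((1 - 2*x) * (x * (1 - x))^(2*k - Suc 0))) (at x)"
    by (rule DERIV_power[OF dq])
  have "((\<lambda>y. -1 / (y * (1 - y))) has_real_derivative ((1 - 2*x) / (x * (1 - x))^2)) (at x)"
    using DERIV_divide[OF DERIV_const[of "-1"] dq] Q0 unfolding Q_def
    by (simp add: power2_eq_square)
  from DERIV_chain2[OF DERIV_exp this]
  have dexp: "((\<lambda>y. exp (-1 / (y * (1 - y)))) has_real_derivative
                 exp (-1 / (x * (1 - x))) * ((1 - 2*x) / (x * (1 - x))^2)) (at x)"
    by simp
  have "((\<lambda>y. poly (bump_poly k) y / (y * (1 - y))^(2*k) * exp (-1 / (y * (1 - y))))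
          has_real_derivative
            (poly (pderiv (bump_poly k)) x * Q^(2*k)
               - poly (bump_poly k) x * (real (2*k) * ((1 - 2*x) * Q^(2*k-1))))
            / (Q^(2*k) * Q^(2*k)) * E
            + (E * ((1 - 2*x) / Q^2)) * (poly (bump_poly k) x / Q^(2*k))) (at x)"
    using DERIV_mult[OF DERIV_divide[OF poly_DERIV dpow] dexp] Q0
    unfolding Q_def E_def by simp
  also have "(poly (pderiv (bump_poly k)) x * Q^(2*k)
               - poly (bump_poly k) x * (real (2*k) * ((1 - 2*x) * Q^(2*k-1))))
            / (Q^(2*k) * Q^(2*k)) * E
            + (E * ((1 - 2*x) / Q^2)) * (poly (bump_poly k) x / Q^(2*k))
           = bump_deriv (Suc k) x"
    using quotient_exp_derivative_eq[OF Q0] assms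
    by (simp add: bump_deriv_def Q_def E_def poly_bump_q poly_pderiv_bump_q)
  finally show ?thesis .
qed

lemma DERIV_zero_if_difference_quotients_vanish:
  fixes f :: "real \<Rightarrow> real"
  assumes "f c = 0"
    and "((\<lambda>h. f (c + h) / h) \<longlongrightarrow> 0) (at_left 0)"
    and "((\<lambda>h. f (c + h) / h) \<longlongrightarrow> 0) (at_right 0)"
  shows "(f has_real_derivative 0) (at c)"
  unfolding DERIV_def using assms filterlim_split_at[OF assms(2,3)] by simp

lemma bump_deriv_has_derivative_0: "(bump_deriv k has_real_derivative 0) (at 0)"
proof (rule DERIV_zero_if_difference_quotients_vanish)
  show "((\<lambda>h. bump_deriv k (0 + h) / h) \<longlongrightarrow> 0) (at_left 0)"
    by (rule tendsto_eventually)
       (auto simp: eventually_at_left_field bump_deriv_def intro!: exI[of _ "-1"])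
  have "((\<lambda>h. poly (bump_poly k) h * (exp (-1 / (h * (1 - h))) / (h * (1 - h))^(2*k+1)) * (1 - h))
          \<longlongrightarrow> poly (bump_poly k) 0 * 0 * (1 - 0)) (at_right 0)"
    by (intro tendsto_intros) real_asymp
  moreover have "eventually (\<lambda>h. poly (bump_poly k) h * (exp (-1 / (h * (1 - h))) / (h * (1 - h))^(2*k+1))
                    * (1 - h) = bump_deriv k (0 + h) / h) (at_right 0)"
    by (auto simp: eventually_at_right_field bump_deriv_def field_simps intro!: exI[of _ 1])
  ultimately show "((\<lambda>h. bump_deriv k (0 + h) / h) \<longlongrightarrow> 0) (at_right 0)"
    by (simp add: tendsto_cong)
qed (simp add: bump_deriv_def)

lemma bump_deriv_has_derivative_1: "(bump_deriv k has_real_derivative 0) (at 1)"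
proof (rule DERIV_zero_if_difference_quotients_vanish)
  show "((\<lambda>h. bump_deriv k (1 + h) / h) \<longlongrightarrow> 0) (at_right 0)"
    by (rule tendsto_eventually)
       (auto simp: eventually_at_right_field bump_deriv_def intro!: exI[of _ 1])
  have "((\<lambda>h. poly (bump_poly k) (1 + h) * (exp (-1 / ((1 + h) * (-h))) / ((1 + h) * (-h))^(2*k+1))
             * (-(1 + h))) \<longlongrightarrow> poly (bump_poly k) (1 + 0) * 0 * (-(1 + 0))) (at_left 0)"
    by (intro tendsto_intros) real_asymp
  moreover have "eventually (\<lambda>h. poly (bump_poly k) (1 + h)
                   * (exp (-1 / ((1 + h) * (-h))) / ((1 + h) * (-h))^(2*k+1)) * (-(1 + h))
                   = bump_deriv k (1 + h) / h) (at_left 0)"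
    unfolding eventually_at_left_field
  proof (intro exI[of _ "-1"] conjI allI impI)
    fix y :: real
    assume y: "-1 < y" "y < 0"
    define Q where "Q = (1 + y) * (-y)"
    define P where "P = poly (bump_poly k) (1 + y)"
    define E where "E = exp (-1 / Q)"
    have Q0: "Q \<noteq> 0" and y0: "y \<noteq> 0" using y by (auto simp: Q_def)
    have "P * (E / Q^(2*k+1)) * (-(1 + y)) = P / Q^(2*k) * E * (-(1 + y) / Q)"
      using Q0 by (simp add: field_simps)
    also have "-(1 + y) / Q = 1 / y" using y0 Q0 by (simp add: Q_def field_simps)
    also have "P / Q^(2*k) * E = bump_deriv k (1 + y)"
      using y by (simp add: bump_deriv_def Q_def P_def E_def)
    finally show "poly (bump_poly k) (1 + y) * (exp (-1 / ((1 + y) * (-y))) / ((1 + y) * (-y))^(2*k+1))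
                   * (-(1 + y)) = bump_deriv k (1 + y) / y"
      by (simp add: P_def E_def Q_def)
  qed simp
  ultimately show "((\<lambda>h. bump_deriv k (1 + h) / h) \<longlongrightarrow> 0) (at_left 0)"
    by (simp add: tendsto_cong)
qed (simp add: bump_deriv_def)

lemma bump_deriv_has_derivative: "(bump_deriv k has_real_derivative bump_deriv (Suc k) x) (at x)"
proof -
  consider "x < 0" | "x = 0" | "0 < x \<and> x < 1" | "x = 1" | "x > 1" by linarith
  then show ?thesis
  proof cases
    case 1
    show ?thesis
      by (rule has_field_derivative_transform_within_open[where f="\<lambda>_. 0" and S="{..<0}"])
         (use 1 in \<open>auto simp: bump_deriv_def\<close>)
  next
    case 2
    then show ?thesis using bump_deriv_has_derivative_0 by (simp add: bump_deriv_def)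
  next
    case 3
    show ?thesis
      by (rule has_field_derivative_transform_within_open[OF bump_deriv_has_derivative_inside,
            where S="{0<..<1}"])
         (use 3 in \<open>auto simp: bump_deriv_def\<close>)
  next
    case 4
    then show ?thesis using bump_deriv_has_derivative_1 by (simp add: bump_deriv_def)
  next
    case 5
    show ?thesis
      by (rule has_field_derivative_transform_within_open[where f="\<lambda>_. 0" and S="{1<..}"])
         (use 5 in \<open>auto simp: bump_deriv_def\<close>)
  qed
qed

lemma continuous_on_bump_deriv: "continuous_on S (bump_deriv k)"
  using bump_deriv_has_derivative by (meson DERIV_isCont continuous_at_imp_continuous_on)

lemma bump_eq: "bump x = (if 0 < x \<and> x < 1 then exp (-1 / (x * (1 - x))) else 0)"
  by (simp add: bump_deriv_def)

lemma bump_nonneg: "bump x \<ge> 0"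
  by (simp add: bump_eq)

lemma bump_pos: "0 < x \<Longrightarrow> x < 1 \<Longrightarrow> bump x > 0"
  by (simp add: bump_eq)

lemma bump_eq_0: "x \<le> 0 \<or> 1 \<le> x \<Longrightarrow> bump x = 0"
  by (auto simp: bump_eq)


section \<open>Smooth steps and test functions\<close>

definition bump_primitive :: "real \<Rightarrow> real" where
  "bump_primitive y = integral {-1..y} bump"

definition bump_mass :: real where
  "bump_mass = bump_primitive 1"

definition smooth_step :: "real \<Rightarrow> real" where
  "smooth_step y = bump_primitive y / bump_mass"

lemma integral_bump_eq_0:
  assumes "b \<le> 0 \<or> 1 \<le> a"
  shows "integral {a..b} bump = 0"
  using assms by (subst integral_cong[where g="\<lambda>_. 0"]) (auto simp: bump_eq)

lemma integral_bump_split: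
  assumes "a \<le> c" "c \<le> b"
  shows "integral {a..b} bump = integral {a..c} bump + integral {c..b} bump"
  using Henstock_Kurzweil_Integration.integral_combine[OF assms
      integrable_continuous_real[OF continuous_on_bump_deriv]] by simp

lemma bump_primitive_eq_integral:
  assumes "A \<le> -1"
  shows "integral {A..u} bump = bump_primitive u"
proof (cases "u \<ge> -1")
  case True
  then show ?thesis
    using integral_bump_split[OF assms True] by (simp add: bump_primitive_def integral_bump_eq_0)
next
  case False
  then show ?thesis using integral_bump_eq_0 by (simp add: bump_primitive_def)
qed

lemma bump_primitive_has_derivative: "(bump_primitive has_real_derivative bump x) (at x)"
proof -
  define A where "A = -\<bar>x\<bar> - 2"
  define B where "B = \<bar>x\<bar> + 2"
  have AB: "A < x" "x < B" "A \<le> -1" by (auto simp: A_def B_def)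
  have "((\<lambda>u. integral {A..u} bump) has_real_derivative bump x) (at x within {A..B})"
    by (rule integral_has_real_derivative[OF continuous_on_bump_deriv]) (use AB in auto)
  then show ?thesis
    using at_within_Icc_at[OF AB(1,2)] bump_primitive_eq_integral[OF AB(3)] by simp
qed

lemma continuous_on_bump_primitive: "continuous_on A bump_primitive"
  by (meson DERIV_isCont[OF bump_primitive_has_derivative] continuous_at_imp_continuous_on)

lemma bump_primitive_mono: "y1 \<le> y2 \<Longrightarrow> bump_primitive y1 \<le> bump_primitive y2"
proof (rule DERIV_nonneg_imp_increasing_open[of y1 y2 bump_primitive])
  fix x
  show "\<exists>y. (bump_primitive has_real_derivative y) (at x) \<and> 0 \<le> y"
    using bump_primitive_has_derivative bump_nonneg by blast
qed (simp_all add: continuous_on_bump_primitive)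

lemma bump_primitive_eq_0: "y \<le> 0 \<Longrightarrow> bump_primitive y = 0"
  by (simp add: bump_primitive_def integral_bump_eq_0)

lemma bump_primitive_eq_mass: "1 \<le> y \<Longrightarrow> bump_primitive y = bump_mass"
  using integral_bump_split[of "-1" 1 y]
  by (simp add: bump_primitive_def bump_mass_def integral_bump_eq_0)

lemma bump_mass_pos: "bump_mass > 0"
proof -
  have "bump_primitive 0 < bump_primitive 1"
  proof (rule DERIV_pos_imp_increasing_open[of 0 1 bump_primitive])
    fix x :: real
    assume "0 < x" "x < 1"
    then show "\<exists>y. (bump_primitive has_real_derivative y) (at x) \<and> 0 < y"
      by (intro exI[of _ "bump x"] conjI bump_primitive_has_derivative bump_pos)
  qed (simp_all add: continuous_on_bump_primitive)
  then show ?thesis by (simp add: bump_mass_def bump_primitive_eq_0)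
qed

lemma smooth_step_has_derivative: "(smooth_step has_real_derivative bump x / bump_mass) (at x)"
  unfolding smooth_step_def by (intro DERIV_cdivide bump_primitive_has_derivative)

lemma smooth_step_eq_0: "y \<le> 0 \<Longrightarrow> smooth_step y = 0"
  by (simp add: smooth_step_def bump_primitive_eq_0)

lemma smooth_step_eq_1: "1 \<le> y \<Longrightarrow> smooth_step y = 1"
  using bump_mass_pos by (simp add: smooth_step_def bump_primitive_eq_mass)

lemma smooth_step_bounds: "0 \<le> smooth_step y \<and> smooth_step y \<le> 1"
proof -
  have "0 \<le> bump_primitive y"
  proof (cases "y \<le> 0")
    case False
    then show ?thesis using bump_primitive_mono[of 0 y] bump_primitive_eq_0[of 0] by simp
  qed (simp add: bump_primitive_eq_0)
  moreover have "bump_primitive y \<le> bump_mass"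
  proof (cases "1 \<le> y")
    case False
    then show ?thesis using bump_primitive_mono[of y 1] unfolding bump_mass_def by simp
  qed (simp add: bump_primitive_eq_mass)
  ultimately show ?thesis using bump_mass_pos by (simp add: smooth_step_def)
qed

definition is_deriv_seq :: "(nat \<Rightarrow> real \<Rightarrow> real) \<Rightarrow> bool" where
  "is_deriv_seq F \<longleftrightarrow> (\<forall>k x. (F k has_real_derivative F (Suc k) x) (at x))"

lemma is_deriv_seq_funpow_deriv: "is_deriv_seq F \<Longrightarrow> (deriv ^^ k) (F 0) = F k"
proof (induction k)
  case (Suc k)
  then have "deriv (F k) = F (Suc k)"
    unfolding is_deriv_seq_def by (auto intro!: ext DERIV_imp_deriv)
  then show ?case using Suc by simp
qed simp

lemma test_funI:
  assumes "is_deriv_seq F" "0 < a" "a \<le> b" "\<And>t. t \<notin> {a..b} \<Longrightarrow> F 0 t = 0"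
  shows "test_fun (F 0)"
  unfolding test_fun_def
proof (intro conjI allI)
  fix k x
  show "((deriv ^^ k) (F 0)) differentiable (at x)"
    using assms(1) unfolding is_deriv_seq_funpow_deriv[OF assms(1)] is_deriv_seq_def
      real_differentiable_def by blast
qed (use assms in blast)

lemma is_deriv_seq_smooth_step:
  "is_deriv_seq (\<lambda>k. case k of 0 \<Rightarrow> smooth_step | Suc j \<Rightarrow> (\<lambda>x. bump_deriv j x / bump_mass))"
  unfolding is_deriv_seq_def
proof (intro allI)
  fix k x
  show "((case k of 0 \<Rightarrow> smooth_step | Suc j \<Rightarrow> (\<lambda>x. bump_deriv j x / bump_mass))
          has_real_derivative
          (case Suc k of 0 \<Rightarrow> smooth_step | Suc j \<Rightarrow> (\<lambda>x. bump_deriv j x / bump_mass)) x) (at x)"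
    by (cases k) (auto intro!: DERIV_cdivide bump_deriv_has_derivative smooth_step_has_derivative)
qed

lemma is_deriv_seq_affine:
  assumes "is_deriv_seq F" "e \<noteq> 0"
  shows "is_deriv_seq (\<lambda>k x. (1/e)^k * F k ((x - a) / e))"
  unfolding is_deriv_seq_def
proof (intro allI)
  fix k x
  have "((\<lambda>x. (x - a) / e) has_real_derivative 1/e) (at x)"
    using assms(2) by (auto intro!: derivative_eq_intros)
  then have "((\<lambda>x. F k ((x - a) / e)) has_real_derivative F (Suc k) ((x - a) / e) * (1/e)) (at x)"
    using DERIV_chain2 assms(1) unfolding is_deriv_seq_def by blast
  from DERIV_cmult[OF this, of "(1/e)^k"]
  show "((\<lambda>x. (1/e)^k * F k ((x - a) / e)) has_real_derivative
          (1/e)^(Suc k) * F (Suc k) ((x - a) / e)) (at x)"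
    by (simp add: algebra_simps)
qed

lemma is_deriv_seq_diff:
  "is_deriv_seq F \<Longrightarrow> is_deriv_seq G \<Longrightarrow> is_deriv_seq (\<lambda>k x. F k x - G k x)"
  unfolding is_deriv_seq_def by (auto intro!: DERIV_diff)

text \<open>The plateau rises from 0 to 1 on [a, a + e] and falls back to 0 on [b - e, b];
  its derivative is the difference of two mollifiers of mass 1.\<close>

definition plateau :: "real \<Rightarrow> real \<Rightarrow> real \<Rightarrow> real \<Rightarrow> real" where
  "plateau a b e x = smooth_step ((x - a) / e) - smooth_step ((x - (b - e)) / e)"

definition mollifier :: "real \<Rightarrow> real \<Rightarrow> real \<Rightarrow> real" where
  "mollifier a e x = bump ((x - a) / e) / (e * bump_mass)"

lemma plateau_deriv_seq:
  assumes "0 < e"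
  obtains F where "is_deriv_seq F" "F 0 = plateau a b e"
    "F 1 = (\<lambda>x. mollifier a e x - mollifier (b - e) e x)"
proof
  let ?S = "\<lambda>k. case k of 0 \<Rightarrow> smooth_step | Suc j \<Rightarrow> (\<lambda>x. bump_deriv j x / bump_mass)"
  show "is_deriv_seq (\<lambda>k x. (1/e)^k * ?S k ((x - a) / e) - (1/e)^k * ?S k ((x - (b - e)) / e))"
    using assms by (intro is_deriv_seq_diff is_deriv_seq_affine is_deriv_seq_smooth_step) auto
qed (auto simp: plateau_def mollifier_def)

lemma plateau_eq_0:
  assumes "0 < e" "a + e \<le> b" "x \<notin> {a..b}"
  shows "plateau a b e x = 0"
proof -
  consider "x < a" | "x > b" using assms(3) by auto
  then show ?thesis
  proof cases
    case 1
    then have "(x - a) / e \<le> 0" "(x - (b - e)) / e \<le> 0"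
      using assms by (simp_all add: divide_nonpos_pos)
    then show ?thesis by (simp add: plateau_def smooth_step_eq_0)
  next
    case 2
    then have "(x - a) / e \<ge> 1" "(x - (b - e)) / e \<ge> 1"
      using assms by (simp_all add: le_divide_eq)
    then show ?thesis by (simp add: plateau_def smooth_step_eq_1)
  qed
qed

lemma test_fun_plateau:
  assumes "0 < a" "0 < e" "a + e \<le> b"
  shows "test_fun (plateau a b e)"
proof -
  obtain F where F: "is_deriv_seq F" "F 0 = plateau a b e"
    using plateau_deriv_seq[OF assms(2)] by metis
  have "test_fun (F 0)"
  proof (rule test_funI[OF F(1) assms(1)])
    show "a \<le> b" using assms by simp
    fix t
    assume "t \<notin> {a..b}"
    then show "F 0 t = 0" using plateau_eq_0[OF assms(2,3)] F(2) by simp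
  qed
  with F(2) show ?thesis by simp
qed

lemma deriv_plateau:
  assumes "0 < e"
  shows "deriv (plateau a b e) x = mollifier a e x - mollifier (b - e) e x"
proof -
  obtain F where "is_deriv_seq F" "F 0 = plateau a b e"
    "F 1 = (\<lambda>x. mollifier a e x - mollifier (b - e) e x)"
    using plateau_deriv_seq[OF assms] by metis
  then show ?thesis using is_deriv_seq_funpow_deriv[of F 1] by simp
qed

lemma abs_plateau_le_1: "\<bar>plateau a b e x\<bar> \<le> 1"
  using smooth_step_bounds[of "(x - a) / e"] smooth_step_bounds[of "(x - (b - e)) / e"]
  unfolding plateau_def by linarith

lemma mollifier_nonneg: "0 < e \<Longrightarrow> mollifier a e x \<ge> 0"
  using bump_nonneg bump_mass_pos by (simp add: mollifier_def)

lemma mollifier_eq_0: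
  assumes "0 < e" "x \<notin> {a..a + e}"
  shows "mollifier a e x = 0"
proof -
  have "(x - a) / e \<le> 0 \<or> 1 \<le> (x - a) / e"
    using assms by (auto simp: divide_nonpos_pos le_divide_eq)
  then show ?thesis by (simp add: mollifier_def bump_eq_0)
qed

lemma continuous_on_mollifier:
  assumes "0 < e"
  shows "continuous_on S (mollifier a e)"
proof -
  have "continuous_on S (\<lambda>x. bump ((x - a) / e))"
    by (rule continuous_on_compose2[OF continuous_on_bump_deriv[of UNIV 0]])
       (use assms in \<open>auto intro!: continuous_intros\<close>)
  then show ?thesis
    unfolding mollifier_def using assms bump_mass_pos by (intro continuous_intros) auto
qed

lemma integral_mollifier:
  assumes "0 < e"
  shows "(LINT x:{a..a + e}|lborel. mollifier a e x) = 1"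
proof -
  have "((\<lambda>x. (x - a) / e) has_real_derivative 1/e) (at x)" for x
    using assms by (auto intro!: derivative_eq_intros)
  from DERIV_chain2[OF smooth_step_has_derivative this]
  have "((\<lambda>x. smooth_step ((x - a) / e)) has_real_derivative mollifier a e x) (at x)" for x
    by (simp add: mollifier_def mult.commute)
  then have "integral\<^sup>L lborel (\<lambda>x. indicator {a..a + e} x *\<^sub>R mollifier a e x)
               = smooth_step ((a + e - a) / e) - smooth_step ((a - a) / e)"
    by (intro integral_FTC_atLeastAtMost)
       (use assms continuous_on_mollifier[OF assms] in
         \<open>auto simp: has_real_derivative_iff_has_vector_derivative[symmetric]
               intro: has_field_derivative_at_within\<close>)
  also have "\<dots> = 1" using assms by (simp add: smooth_step_eq_0 smooth_step_eq_1)
  finally show ?thesis unfolding set_lebesgue_integral_def .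
qed

lemma mollifier_average_approx:
  fixes u :: "real \<Rightarrow> real"
  assumes e: "0 < e" and u: "continuous_on {a..a + e} u"
    and close: "\<And>x. x \<in> {a..a + e} \<Longrightarrow> \<bar>u x - c\<bar> \<le> \<omega>"
  shows "\<bar>(LINT x:{a..a + e}|lborel. u x * mollifier a e x) - c\<bar> \<le> \<omega>"
proof -
  have int: "set_integrable lborel {a..a + e} (\<lambda>x. f x * mollifier a e x)"
    if "continuous_on {a..a + e} f" for f
    by (rule borel_integrable_atLeastAtMost')
       (intro continuous_on_mult that continuous_on_mollifier[OF e])
  have cu: "continuous_on {a..a + e} (\<lambda>x. u x - c)"
    by (intro continuous_on_diff u continuous_on_const)
  have "(LINT x:{a..a + e}|lborel. u x * mollifier a e x) - c
      = (LINT x:{a..a + e}|lborel. u x * mollifier a e x) - (LINT x:{a..a + e}|lborel. c * mollifier a e x)"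
    using integral_mollifier[OF e] by simp
  also have "\<dots> = (LINT x:{a..a + e}|lborel. (u x - c) * mollifier a e x)"
    using set_integral_diff(2)[OF int[OF u] int[OF continuous_on_const]]
    by (simp add: left_diff_distrib)
  finally have "\<bar>(LINT x:{a..a + e}|lborel. u x * mollifier a e x) - c\<bar>
      = \<bar>LINT x:{a..a + e}|lborel. (u x - c) * mollifier a e x\<bar>" by simp
  also have "\<dots> \<le> (LINT x:{a..a + e}|lborel. \<bar>(u x - c) * mollifier a e x\<bar>)"
    using set_integral_norm_bound[OF int[OF cu]] by simp
  also have "\<dots> \<le> (LINT x:{a..a + e}|lborel. \<omega> * mollifier a e x)"
  proof (rule set_integral_mono)
    show "set_integrable lborel {a..a + e} (\<lambda>x. \<bar>(u x - c) * mollifier a e x\<bar>)"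
      by (rule set_integrable_abs[OF int[OF cu]])
    show "set_integrable lborel {a..a + e} (\<lambda>x. \<omega> * mollifier a e x)"
      by (rule int[OF continuous_on_const])
    fix x
    assume "x \<in> {a..a + e}"
    then show "\<bar>(u x - c) * mollifier a e x\<bar> \<le> \<omega> * mollifier a e x"
      using close mollifier_nonneg[OF e, of a x] by (simp add: abs_mult mult_right_mono)
  qed
  also have "\<dots> = \<omega>" using integral_mollifier[OF e] by simp
  finally show ?thesis .
qed

section \<open>Increments of a function with a weak derivative\<close>

lemma set_integral_nonneg:
  fixes f :: "'a \<Rightarrow> real"
  shows "(\<And>x. x \<in> A \<Longrightarrow> 0 \<le> f x) \<Longrightarrow> 0 \<le> (LINT x:A|M. f x)"
  unfolding set_lebesgue_integral_def
  by (rule Bochner_Integration.integral_nonneg) (simp add: indicator_def)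

lemma set_integral_eq_if_vanishes_outside:
  fixes f :: "'a \<Rightarrow> real"
  assumes "T \<subseteq> S" "\<And>x. x \<in> S - T \<Longrightarrow> f x = 0"
  shows "(LINT x:S|M. f x) = (LINT x:T|M. f x)"
    and "set_integrable M T f \<Longrightarrow> set_integrable M S f"
proof -
  have eq: "(\<lambda>x. indicator S x *\<^sub>R f x) = (\<lambda>x. indicator T x *\<^sub>R f x)"
  proof
    fix x
    show "indicator S x *\<^sub>R f x = indicator T x *\<^sub>R f x"
      using assms by (cases "x \<in> T") (auto simp: indicator_def)
  qed
  show "(LINT x:S|M. f x) = (LINT x:T|M. f x)"
    unfolding set_lebesgue_integral_def eq ..
  show "set_integrable M T f \<Longrightarrow> set_integrable M S f"
    unfolding set_integrable_def eq .
qed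

lemma loc_int_set_integrable_Icc:
  assumes "loc_int f" "0 < a"
  shows "set_integrable lborel {a..b} f"
proof -
  have "{a..b} \<subseteq> {0<..}" using assms(2) by auto
  then show ?thesis using assms(1) compact_Icc unfolding loc_int_def by blast
qed

lemma continuous_on_open_delta:
  fixes v :: "real \<Rightarrow> real"
  assumes "continuous_on S v" "open S" "a \<in> S" "0 < \<omega>"
  obtains d where "d > 0" "\<And>x. \<bar>x - a\<bar> < d \<Longrightarrow> \<bar>v x - v a\<bar> \<le> \<omega>"
proof -
  have "isCont v a" using assms continuous_on_eq_continuous_at by blast
  then obtain d where "d > 0" "\<And>x. \<bar>x - a\<bar> < d \<Longrightarrow> \<bar>v x - v a\<bar> < \<omega>"
    using assms(4) unfolding continuous_at_eps_delta dist_real_def by blast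
  then show ?thesis using that by force
qed

lemma integral_mult_deriv_plateau:
  fixes v :: "real \<Rightarrow> real"
  assumes v: "continuous_on {0<..} v" and "0 < a" and e: "0 < e" and "a + e \<le> b"
  shows "(LINT t:{0<..}|lborel. v t * deriv (plateau a b e) t)
           = (LINT t:{a..a + e}|lborel. v t * mollifier a e t)
             - (LINT t:{b - e..b}|lborel. v t * mollifier (b - e) e t)"
proof -
  have piece: "(LINT t:{0<..}|lborel. v t * mollifier c e t) = (LINT t:{c..c + e}|lborel. v t * mollifier c e t)"
       "set_integrable lborel {0<..} (\<lambda>t. v t * mollifier c e t)" if "0 < c" for c
  proof -
    have "continuous_on {c..c + e} (\<lambda>t. v t * mollifier c e t)"
      by (intro continuous_on_mult continuous_on_mollifier[OF e] continuous_on_subset[OF v])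
         (use that in auto)
    then have "set_integrable lborel {c..c + e} (\<lambda>t. v t * mollifier c e t)"
      by (rule borel_integrable_atLeastAtMost')
    moreover have "{c..c + e} \<subseteq> {0<..}" using that by auto
    ultimately show "(LINT t:{0<..}|lborel. v t * mollifier c e t) = (LINT t:{c..c + e}|lborel. v t * mollifier c e t)"
      "set_integrable lborel {0<..} (\<lambda>t. v t * mollifier c e t)"
      using set_integral_eq_if_vanishes_outside[of "{c..c + e}" "{0<..}"] mollifier_eq_0[OF e]
      by auto
  qed
  have "b - e > 0" using assms by simp
  have "(LINT t:{0<..}|lborel. v t * deriv (plateau a b e) t)
      = (LINT t:{0<..}|lborel. v t * mollifier a e t - v t * mollifier (b - e) e t)"
    by (simp add: deriv_plateau[OF e] right_diff_distrib)
  also have "\<dots> = (LINT t:{0<..}|lborel. v t * mollifier a e t) - (LINT t:{0<..}|lborel. v t * mollifier (b - e) e t)"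
    using piece(2) \<open>0 < a\<close> \<open>b - e > 0\<close> by (simp add: set_integral_diff)
  finally show ?thesis
    using piece(1)[OF \<open>0 < a\<close>] piece(1)[OF \<open>b - e > 0\<close>] by simp
qed

lemma abs_integral_mult_plateau_le:
  fixes w :: "real \<Rightarrow> real"
  assumes w: "loc_int w" and a: "0 < a" and e: "0 < e" and "a + e \<le> b"
  shows "\<bar>LINT t:{0<..}|lborel. w t * plateau a b e t\<bar> \<le> (LINT t:{a..b}|lborel. \<bar>w t\<bar>)"
proof -
  have iw: "set_integrable lborel {a..b} w" by (rule loc_int_set_integrable_Icc[OF w a])
  have "continuous_on UNIV (plateau a b e)"
    using test_fun_plateau[OF a e assms(4)] unfolding test_fun_def
    by (metis funpow_0 differentiable_imp_continuous_within continuous_at_imp_continuous_on)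
  then have "plateau a b e \<in> borel_measurable borel"
    by (rule borel_measurable_continuous_onI)
  moreover have "(\<lambda>x. indicator {a..b} x *\<^sub>R w x) \<in> borel_measurable lborel"
    using iw unfolding set_integrable_def by (rule borel_measurable_integrable)
  ultimately have "(\<lambda>x. (indicator {a..b} x *\<^sub>R w x) * plateau a b e x) \<in> borel_measurable lborel"
    by measurable
  then have "set_borel_measurable lborel {a..b} (\<lambda>x. w x * plateau a b e x)"
    unfolding set_borel_measurable_def by (simp add: mult.assoc)
  then have iwp: "set_integrable lborel {a..b} (\<lambda>x. w x * plateau a b e x)"
    by (rule set_integrable_bound[OF iw])
       (use abs_plateau_le_1 in \<open>auto simp: abs_mult intro!: mult_left_le\<close>)
  have "\<bar>LINT t:{0<..}|lborel. w t * plateau a b e t\<bar> = \<bar>LINT t:{a..b}|lborel. w t * plateau a b e t\<bar>"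
    using set_integral_eq_if_vanishes_outside(1)[of "{a..b}" "{0<..}"] plateau_eq_0[OF e assms(4)] a
    by (simp add: subset_eq)
  also have "\<dots> \<le> (LINT t:{a..b}|lborel. \<bar>w t * plateau a b e t\<bar>)"
    using set_integral_norm_bound[OF iwp] by simp
  also have "\<dots> \<le> (LINT t:{a..b}|lborel. \<bar>w t\<bar>)"
    by (rule set_integral_mono[OF set_integrable_abs[OF iwp] set_integrable_abs[OF iw]])
       (use abs_plateau_le_1 in \<open>auto simp: abs_mult intro!: mult_left_le\<close>)
  finally show ?thesis .
qed

lemma weak_deriv_increment_le_eps:
  fixes v v' :: "real \<Rightarrow> real"
  assumes wd: "weak_deriv v v'" and v: "continuous_on {0<..} v" and ab: "0 < a" "a < b"
    and \<omega>: "0 < \<omega>"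
  shows "\<bar>v b - v a\<bar> \<le> (LINT x:{a..b}|lborel. \<bar>v' x\<bar>) + 2 * \<omega>"
proof -
  obtain da where da: "da > 0" "\<And>x. \<bar>x - a\<bar> < da \<Longrightarrow> \<bar>v x - v a\<bar> \<le> \<omega>"
    using continuous_on_open_delta[OF v open_greaterThan _ \<omega>, of a] ab by auto
  obtain db where db: "db > 0" "\<And>x. \<bar>x - b\<bar> < db \<Longrightarrow> \<bar>v x - v b\<bar> \<le> \<omega>"
    using continuous_on_open_delta[OF v open_greaterThan _ \<omega>, of b] ab by auto
  obtain e where e: "0 < e" "e < da" "e < db" "a + e \<le> b"
    using da(1) db(1) ab by (intro that[of "min (min da db / 2) ((b - a) / 2)"]) (auto simp: min_def field_simps)
  have test: "(LINT t:{0<..}|lborel. v t * deriv (plateau a b e) t)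
                = - (LINT t:{0<..}|lborel. v' t * plateau a b e t)"
    using wd test_fun_plateau[OF ab(1) e(1,4)] unfolding weak_deriv_def by blast
  have near_a: "\<bar>(LINT t:{a..a + e}|lborel. v t * mollifier a e t) - v a\<bar> \<le> \<omega>"
    by (rule mollifier_average_approx[OF e(1)])
       (use da e ab in \<open>auto intro: continuous_on_subset[OF v]\<close>)
  have near_b: "\<bar>(LINT t:{b - e..b - e + e}|lborel. v t * mollifier (b - e) e t) - v b\<bar> \<le> \<omega>"
    by (rule mollifier_average_approx[OF e(1)])
       (use db e ab in \<open>auto intro: continuous_on_subset[OF v]\<close>)
  have "loc_int v'" using wd unfolding weak_deriv_def by blast
  from abs_integral_mult_plateau_le[OF this ab(1) e(1,4)] test near_a near_b
    integral_mult_deriv_plateau[OF v ab(1) e(1,4)]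
  show ?thesis by simp
qed

lemma weak_deriv_increment_le:
  fixes v v' :: "real \<Rightarrow> real"
  assumes "weak_deriv v v'" "continuous_on {0<..} v" "0 < a" "a \<le> b"
  shows "\<bar>v b - v a\<bar> \<le> (LINT x:{a..b}|lborel. \<bar>v' x\<bar>)"
proof (cases "a = b")
  case False
  show ?thesis
  proof (rule field_le_epsilon)
    fix \<epsilon> :: real
    assume "0 < \<epsilon>"
    then show "\<bar>v b - v a\<bar> \<le> (LINT x:{a..b}|lborel. \<bar>v' x\<bar>) + \<epsilon>"
      using weak_deriv_increment_le_eps[OF assms(1-3), of b "\<epsilon>/2"] False assms(4) by simp
  qed
qed (simp add: set_integral_nonneg)

section \<open>The integrated chain rule for the p-th power\<close>

lemma continuity_induction_le:
  fixes K :: "real \<Rightarrow> real"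
  assumes "t \<le> T"
    and step: "\<And>s. t \<le> s \<Longrightarrow> s < T \<Longrightarrow>
                 \<exists>\<delta>>0. \<forall>s'. s < s' \<and> s' < s + \<delta> \<and> s' \<le> T \<longrightarrow> K s \<le> K s'"
    and left: "\<And>s c. t < s \<Longrightarrow> s \<le> T \<Longrightarrow> (\<forall>r. t \<le> r \<and> r < s \<longrightarrow> c \<le> K r) \<Longrightarrow> c \<le> K s"
  shows "K t \<le> K T"
proof -
  define S where "S = {s. t \<le> s \<and> s \<le> T \<and> (\<forall>r. t \<le> r \<and> r \<le> s \<longrightarrow> K t \<le> K r)}"
  have "t \<in> S" using assms(1) by (auto simp: S_def)
  have bdd: "bdd_above S" by (rule bdd_aboveI[of _ T]) (auto simp: S_def)
  define \<sigma> where "\<sigma> = Sup S"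
  have "t \<le> \<sigma>" unfolding \<sigma>_def by (rule cSup_upper[OF \<open>t \<in> S\<close> bdd])
  have "\<sigma> \<le> T" unfolding \<sigma>_def using \<open>t \<in> S\<close> by (intro cSup_least) (auto simp: S_def)
  have below: "K t \<le> K r" if "t \<le> r" "r < \<sigma>" for r
  proof -
    obtain s where "s \<in> S" "r < s"
      using less_cSup_iff[OF _ bdd] \<open>t \<in> S\<close> \<open>r < \<sigma>\<close> unfolding \<sigma>_def by blast
    then show ?thesis using that by (auto simp: S_def)
  qed
  have at: "K t \<le> K \<sigma>"
    using left[OF _ \<open>\<sigma> \<le> T\<close>] below \<open>t \<le> \<sigma>\<close> by (cases "\<sigma> = t") auto
  have "\<sigma> \<in> S"
    using below at \<open>t \<le> \<sigma>\<close> \<open>\<sigma> \<le> T\<close> unfolding S_def by (auto simp: le_less)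
  have "\<sigma> = T"
  proof (rule ccontr)
    assume "\<sigma> \<noteq> T"
    then have "\<sigma> < T" using \<open>\<sigma> \<le> T\<close> by simp
    then obtain \<delta> where \<delta>: "\<delta> > 0" "\<forall>s'. \<sigma> < s' \<and> s' < \<sigma> + \<delta> \<and> s' \<le> T \<longrightarrow> K \<sigma> \<le> K s'"
      using step[OF \<open>t \<le> \<sigma>\<close>] by blast
    define s where "s = min (\<sigma> + \<delta>/2) T"
    have s: "\<sigma> < s" "s \<le> T" "s < \<sigma> + \<delta>" using \<delta> \<open>\<sigma> < T\<close> by (auto simp: s_def)
    have "K t \<le> K r" if "t \<le> r" "r \<le> s" for r
    proof (cases "r \<le> \<sigma>")
      case True
      then show ?thesis using \<open>\<sigma> \<in> S\<close> that unfolding S_def by auto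
    next
      case False
      then have "K \<sigma> \<le> K r" using \<delta>(2) that s by simp
      then show ?thesis using at by simp
    qed
    then have "s \<in> S" using s \<open>t \<le> \<sigma>\<close> unfolding S_def by auto
    then show False using cSup_upper[OF _ bdd] s(1) unfolding \<sigma>_def by fastforce
  qed
  then show ?thesis using at by simp
qed

lemma set_integral_Icc_split:
  fixes g :: "real \<Rightarrow> real"
  assumes "set_integrable lborel {a..c} g" "a \<le> b" "b \<le> c"
  shows "(LINT x:{a..c}|lborel. g x) = (LINT x:{a..b}|lborel. g x) + (LINT x:{b..c}|lborel. g x)"
proof -
  have "set_integrable lborel {a..b} g" "set_integrable lborel {b..c} g"
    by (rule set_integrable_subset[OF assms(1)]; use assms(2,3) in auto)+
  then show ?thesis
    using set_borel_integral_eq_integral[OF assms(1)] assms(2,3)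
      set_borel_integral_eq_integral[of "{a..b}" g] set_borel_integral_eq_integral[of "{b..c}" g]
      Henstock_Kurzweil_Integration.integral_combine[of a b c g]
    by simp
qed

lemma set_integrable_continuous_mult:
  fixes f c :: "real \<Rightarrow> real"
  assumes f: "set_integrable lborel {a..b} f" and c: "continuous_on {a..b} c"
  shows "set_integrable lborel {a..b} (\<lambda>x. c x * f x)"
proof -
  obtain M where M: "\<And>x. x \<in> {a..b} \<Longrightarrow> \<bar>c x\<bar> \<le> M"
    using compact_imp_bounded[OF compact_continuous_image[OF c compact_Icc]]
    unfolding bounded_iff by fastforce
  have "(\<lambda>x. indicator {a..b} x *\<^sub>R c x) \<in> borel_measurable borel"
    by (rule borel_measurable_continuous_on_indicator[OF _ c]) simp
  moreover have "(\<lambda>x. indicator {a..b} x *\<^sub>R f x) \<in> borel_measurable lborel"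
    using f unfolding set_integrable_def by (rule borel_measurable_integrable)
  ultimately have "(\<lambda>x. (indicator {a..b} x *\<^sub>R c x) * (indicator {a..b} x *\<^sub>R f x)) \<in> borel_measurable lborel"
    by measurable
  moreover have "(\<lambda>x. (indicator {a..b} x *\<^sub>R c x) * (indicator {a..b} x *\<^sub>R f x))
                   = (\<lambda>x. indicator {a..b} x *\<^sub>R (c x * f x))"
    by (auto simp: indicator_def)
  ultimately have meas: "set_borel_measurable lborel {a..b} (\<lambda>x. c x * f x)"
    unfolding set_borel_measurable_def by simp
  have "set_integrable lborel {a..b} (\<lambda>x. M * f x)" using f by simp
  then show ?thesis
  proof (rule set_integrable_bound[OF _ meas])
    have "\<bar>c x\<bar> * \<bar>f x\<bar> \<le> \<bar>M\<bar> * \<bar>f x\<bar>" if "x \<in> {a..b}" for x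
      using M[OF that] by (intro mult_right_mono) auto
    then show "AE x in lborel. x \<in> {a..b} \<longrightarrow> norm (c x * f x) \<le> norm (M * f x)"
      by (simp add: abs_mult)
  qed
qed

lemma powr_diff_le_tangent:
  fixes p A B :: real
  assumes p: "p > 1" and "A \<ge> 0" "B \<ge> 0"
  shows "A powr p - B powr p \<le> p * A powr (p - 1) * (A - B)"
proof -
  define q where "q = p / (p - 1)"
  have q: "q > 1" "1/q + 1/p = 1" using p by (simp_all add: q_def field_simps)
  have "A powr (p - 1) * B \<le> (A powr (p - 1)) powr q / q + B powr p / p"
    using Youngs_inequality[OF q(1) p q(2)] assms by simp
  also have "(A powr (p - 1)) powr q = A powr p"
    using p by (simp add: powr_powr q_def)
  finally have "p * (A powr (p - 1) * B) \<le> p * (A powr p / q + B powr p / p)"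
    using p by simp
  also have "\<dots> = (p - 1) * A powr p + B powr p"
    using p by (simp add: q_def field_simps)
  finally show ?thesis
    using powr_add[of A "p - 1" 1] assms by (simp add: algebra_simps)
qed

text \<open>|x|^(p - 1) with 0^0 read as 1 (in Isabelle 0 powr 0 = 0), so that it depends
  continuously on x for every p \<ge> 1.\<close>

definition abs_powr_pred :: "real \<Rightarrow> real \<Rightarrow> real" where
  "abs_powr_pred p x = (if p = 1 then 1 else \<bar>x\<bar> powr (p - 1))"

lemma abs_powr_pred_nonneg: "abs_powr_pred p x \<ge> 0"
  by (simp add: abs_powr_pred_def)

lemma abs_powr_diff_le:
  assumes "p \<ge> 1"
  shows "\<bar>x\<bar> powr p - \<bar>y\<bar> powr p \<le> p * abs_powr_pred p x * \<bar>x - y\<bar>"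
proof (cases "p = 1")
  case False
  then have "p > 1" using assms by simp
  have "\<bar>x\<bar> powr p - \<bar>y\<bar> powr p \<le> p * \<bar>x\<bar> powr (p - 1) * (\<bar>x\<bar> - \<bar>y\<bar>)"
    by (rule powr_diff_le_tangent[OF \<open>p > 1\<close>]) auto
  also have "\<dots> \<le> p * \<bar>x\<bar> powr (p - 1) * \<bar>x - y\<bar>"
    using \<open>p > 1\<close> by (intro mult_left_mono) auto
  finally show ?thesis using False by (simp add: abs_powr_pred_def)
qed (simp add: abs_powr_pred_def)

lemma continuous_on_abs_powr_pred:
  fixes v :: "real \<Rightarrow> real"
  assumes "p \<ge> 1" "continuous_on A v"
  shows "continuous_on A (\<lambda>x. abs_powr_pred p (v x))"
proof (cases "p = 1")
  case False
  with assms have "continuous_on A (\<lambda>x. \<bar>v x\<bar> powr (p - 1))"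
    by (intro continuous_on_powr' continuous_intros) auto
  with False show ?thesis by (simp add: abs_powr_pred_def)
qed (simp add: abs_powr_pred_def)

lemma continuous_on_abs_powr:
  fixes v :: "real \<Rightarrow> real"
  assumes "p \<ge> 1" "continuous_on A v"
  shows "continuous_on A (\<lambda>x. \<bar>v x\<bar> powr p)"
  using assms by (intro continuous_on_powr' continuous_intros) auto

lemma loc_int_continuous_mult_abs:
  fixes w c :: "real \<Rightarrow> real"
  assumes "loc_int w" "continuous_on {0<..} c" "0 < a"
  shows "set_integrable lborel {a..b} (\<lambda>r. c r * \<bar>w r\<bar>)"
  by (rule set_integrable_continuous_mult[OF set_integrable_abs[OF loc_int_set_integrable_Icc[OF assms(1,3)]]])
     (rule continuous_on_subset[OF assms(2)], use assms(3) in auto)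

lemma abs_powr_local_step:
  fixes v v' :: "real \<Rightarrow> real"
  assumes p: "p \<ge> 1" and v: "continuous_on {0<..} v" and v': "loc_int v'"
    and incr: "\<And>a b. 0 < a \<Longrightarrow> a \<le> b \<Longrightarrow> \<bar>v b - v a\<bar> \<le> (LINT x:{a..b}|lborel. \<bar>v' x\<bar>)"
    and s: "0 < s" and \<omega>: "0 < \<omega>"
  obtains \<delta> where "\<delta> > 0"
    "\<And>s'. s \<le> s' \<Longrightarrow> s' < s + \<delta> \<Longrightarrow>
       \<bar>v s\<bar> powr p \<le> \<bar>v s'\<bar> powr p + (LINT r:{s..s'}|lborel. (p * abs_powr_pred p (v r) + \<omega>) * \<bar>v' r\<bar>)"
proof -
  have h: "continuous_on {0<..} (\<lambda>x. abs_powr_pred p (v x))"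
    by (rule continuous_on_abs_powr_pred[OF p v])
  obtain \<delta> where \<delta>: "\<delta> > 0"
    "\<And>x. \<bar>x - s\<bar> < \<delta> \<Longrightarrow> \<bar>abs_powr_pred p (v x) - abs_powr_pred p (v s)\<bar> \<le> \<omega> / p"
    using continuous_on_open_delta[OF h open_greaterThan, of s "\<omega> / p"] s \<omega> p by auto
  show ?thesis
  proof (rule that[OF \<delta>(1)])
    fix s'
    assume s': "s \<le> s'" "s' < s + \<delta>"
    have "\<bar>v s\<bar> powr p - \<bar>v s'\<bar> powr p \<le> p * abs_powr_pred p (v s) * \<bar>v s - v s'\<bar>"
      by (rule abs_powr_diff_le[OF p])
    also have "\<dots> \<le> p * abs_powr_pred p (v s) * (LINT x:{s..s'}|lborel. \<bar>v' x\<bar>)"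
      using incr[OF s s'(1)] p abs_powr_pred_nonneg[of p "v s"]
      by (intro mult_left_mono) (auto simp: abs_minus_commute)
    also have "\<dots> = (LINT x:{s..s'}|lborel. p * abs_powr_pred p (v s) * \<bar>v' x\<bar>)"
      by simp
    also have "\<dots> \<le> (LINT r:{s..s'}|lborel. (p * abs_powr_pred p (v r) + \<omega>) * \<bar>v' r\<bar>)"
    proof (rule set_integral_mono)
      show "set_integrable lborel {s..s'} (\<lambda>x. p * abs_powr_pred p (v s) * \<bar>v' x\<bar>)"
        using loc_int_continuous_mult_abs[OF v' continuous_on_const s] by simp
      show "set_integrable lborel {s..s'} (\<lambda>r. (p * abs_powr_pred p (v r) + \<omega>) * \<bar>v' r\<bar>)"
        by (intro loc_int_continuous_mult_abs[OF v' _ s] continuous_intros h)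
      fix x
      assume "x \<in> {s..s'}"
      then have "\<bar>abs_powr_pred p (v x) - abs_powr_pred p (v s)\<bar> \<le> \<omega> / p"
        using \<delta>(2) s' by auto
      then have "p * abs_powr_pred p (v s) \<le> p * abs_powr_pred p (v x) + \<omega>"
        using p by (simp add: field_simps abs_le_iff)
      then show "p * abs_powr_pred p (v s) * \<bar>v' x\<bar> \<le> (p * abs_powr_pred p (v x) + \<omega>) * \<bar>v' x\<bar>"
        by (intro mult_right_mono) auto
    qed
    finally show "\<bar>v s\<bar> powr p \<le> \<bar>v s'\<bar> powr p
                    + (LINT r:{s..s'}|lborel. (p * abs_powr_pred p (v r) + \<omega>) * \<bar>v' r\<bar>)"
      by simp
  qed
qed

lemma le_left_limit_add_mono:
  fixes \<phi> G :: "real \<Rightarrow> real"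
  assumes "t < s" "isCont \<phi> s" and mono: "\<And>r. t \<le> r \<Longrightarrow> r \<le> s \<Longrightarrow> G r \<le> G s"
    and below: "\<And>r. t \<le> r \<Longrightarrow> r < s \<Longrightarrow> c \<le> \<phi> r + G r"
  shows "c \<le> \<phi> s + G s"
proof -
  have "((\<lambda>r. \<phi> r + G s) \<longlongrightarrow> \<phi> s + G s) (at_left s)"
    using assms(2) by (intro tendsto_add tendsto_const) (simp add: filterlim_at_split isCont_def)
  moreover have "eventually (\<lambda>r. c \<le> \<phi> r + G s) (at_left s)"
    unfolding eventually_at_left_field
  proof (intro exI[of _ t] conjI allI impI)
    fix r
    assume "t < r" "r < s"
    then show "c \<le> \<phi> r + G s" using below[of r] mono[of r] by simp
  qed (use assms(1) in simp)
  ultimately show ?thesis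
    using tendsto_lowerbound trivial_limit_at_left_real by blast
qed

lemma abs_powr_le_integral_eps:
  fixes v v' :: "real \<Rightarrow> real"
  assumes p: "p \<ge> 1" and v: "continuous_on {0<..} v" and v': "loc_int v'"
    and incr: "\<And>a b. 0 < a \<Longrightarrow> a \<le> b \<Longrightarrow> \<bar>v b - v a\<bar> \<le> (LINT x:{a..b}|lborel. \<bar>v' x\<bar>)"
    and t: "0 < t" "t \<le> T" and \<omega>: "0 < \<omega>"
  shows "\<bar>v t\<bar> powr p \<le> \<bar>v T\<bar> powr p + (LINT r:{t..T}|lborel. (p * abs_powr_pred p (v r) + \<omega>) * \<bar>v' r\<bar>)"
proof -
  define g where "g r = (p * abs_powr_pred p (v r) + \<omega>) * \<bar>v' r\<bar>" for r
  define G where "G s = (LINT r:{t..s}|lborel. g r)" for s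
  have G_split: "G s' = G s + (LINT r:{s..s'}|lborel. g r)" if "t \<le> s" "s \<le> s'" for s s'
    unfolding G_def g_def
    by (intro set_integral_Icc_split that loc_int_continuous_mult_abs[OF v' _ t(1)]
          continuous_intros continuous_on_abs_powr_pred[OF p v])
  have g_nonneg: "0 \<le> g r" for r
    using p \<omega> abs_powr_pred_nonneg[of p "v r"] by (simp add: g_def)
  have "\<bar>v t\<bar> powr p + G t \<le> \<bar>v T\<bar> powr p + G T"
  proof (rule continuity_induction_le[OF t(2)])
    fix s
    assume s: "t \<le> s" "s < T"
    obtain \<delta> where "\<delta> > 0" and \<delta>: "\<And>s'. s \<le> s' \<Longrightarrow> s' < s + \<delta> \<Longrightarrow>
        \<bar>v s\<bar> powr p \<le> \<bar>v s'\<bar> powr p + (LINT r:{s..s'}|lborel. g r)"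
      using abs_powr_local_step[OF p v v' incr _ \<omega>, of s] s t unfolding g_def by auto
    show "\<exists>\<delta>>0. \<forall>s'. s < s' \<and> s' < s + \<delta> \<and> s' \<le> T \<longrightarrow>
            \<bar>v s\<bar> powr p + G s \<le> \<bar>v s'\<bar> powr p + G s'"
    proof (intro exI[of _ \<delta>] conjI allI impI)
      fix s'
      assume "s < s' \<and> s' < s + \<delta> \<and> s' \<le> T"
      with \<delta>[of s'] G_split[of s s'] s
      show "\<bar>v s\<bar> powr p + G s \<le> \<bar>v s'\<bar> powr p + G s'" by simp
    qed (rule \<open>\<delta> > 0\<close>)
  next
    fix s c
    assume s: "t < s" "s \<le> T" and "\<forall>r. t \<le> r \<and> r < s \<longrightarrow> c \<le> \<bar>v r\<bar> powr p + G r"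
    moreover have "isCont (\<lambda>x. \<bar>v x\<bar> powr p) s"
      using continuous_on_abs_powr[OF p v] s t
      by (simp add: continuous_on_eq_continuous_at[OF open_greaterThan])
    moreover have "G r \<le> G s" if "t \<le> r" "r \<le> s" for r
      using G_split[OF that] set_integral_nonneg[OF g_nonneg, of lborel "{r..s}"] by simp
    ultimately show "c \<le> \<bar>v s\<bar> powr p + G s"
      by (intro le_left_limit_add_mono[of t s "\<lambda>x. \<bar>v x\<bar> powr p" G]) auto
  qed
  moreover have "G t = 0"
    unfolding G_def set_lebesgue_integral_def
    by (rule integral_eq_zero_AE, rule eventually_mono[OF AE_lborel_singleton[of t]])
       (auto simp: indicator_def)
  ultimately show ?thesis by (simp add: G_def g_def)
qed

lemma abs_powr_le_integral:
  fixes v v' :: "real \<Rightarrow> real"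
  assumes p: "p \<ge> 1" and v: "continuous_on {0<..} v" and v': "loc_int v'"
    and incr: "\<And>a b. 0 < a \<Longrightarrow> a \<le> b \<Longrightarrow> \<bar>v b - v a\<bar> \<le> (LINT x:{a..b}|lborel. \<bar>v' x\<bar>)"
    and t: "0 < t" "t \<le> T"
  shows "\<bar>v t\<bar> powr p \<le> \<bar>v T\<bar> powr p + p * (LINT r:{t..T}|lborel. abs_powr_pred p (v r) * \<bar>v' r\<bar>)"
proof (rule field_le_epsilon)
  fix \<epsilon> :: real
  assume "0 < \<epsilon>"
  define L where "L = (LINT r:{t..T}|lborel. \<bar>v' r\<bar>)"
  have "L \<ge> 0" unfolding L_def by (rule set_integral_nonneg) simp
  define \<omega> where "\<omega> = \<epsilon> / (L + 1)"
  have "0 < \<omega>" using \<open>0 < \<epsilon>\<close> \<open>L \<ge> 0\<close> by (simp add: \<omega>_def)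
  have "\<omega> * L \<le> \<epsilon>"
    using \<open>0 < \<epsilon>\<close> \<open>L \<ge> 0\<close> by (simp add: \<omega>_def field_simps)
  have int: "set_integrable lborel {t..T} (\<lambda>r. c r * \<bar>v' r\<bar>)" if "continuous_on {0<..} c" for c
    by (rule loc_int_continuous_mult_abs[OF v' that t(1)])
  have "(LINT r:{t..T}|lborel. (p * abs_powr_pred p (v r) + \<omega>) * \<bar>v' r\<bar>)
      = (LINT r:{t..T}|lborel. p * (abs_powr_pred p (v r) * \<bar>v' r\<bar>) + \<omega> * \<bar>v' r\<bar>)"
    by (simp add: algebra_simps)
  also have "\<dots> = p * (LINT r:{t..T}|lborel. abs_powr_pred p (v r) * \<bar>v' r\<bar>) + \<omega> * L"
    using int[OF continuous_on_abs_powr_pred[OF p v]] int[OF continuous_on_const]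
    by (simp add: set_integral_add L_def)
  finally show "\<bar>v t\<bar> powr p \<le> \<bar>v T\<bar> powr p + p * (LINT r:{t..T}|lborel. abs_powr_pred p (v r) * \<bar>v' r\<bar>) + \<epsilon>"
    using abs_powr_le_integral_eps[OF p v v' incr t \<open>0 < \<omega>\<close>] \<open>\<omega> * L \<le> \<epsilon>\<close> by linarith
qed

section \<open>Hoelder's inequality for the chain-rule integrand\<close>

lemma young_scaled:
  fixes p q lam a b :: real
  assumes pq: "p > 1" "q > 1" "1/p + 1/q = 1" and "lam > 0" "a \<ge> 0" "b \<ge> 0"
  shows "a powr (p - 1) * b \<le> lam powr q * a powr p / q + b powr p / (lam powr p * p)"
proof -
  have "q * (p - 1) = p" using pq by (simp add: field_simps)
  have "(lam * a powr (p - 1)) * (b / lam) \<le> (lam * a powr (p - 1)) powr q / q + (b / lam) powr p / p"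
    using assms by (intro Youngs_inequality) auto
  moreover have "(lam * a powr (p - 1)) powr q = lam powr q * a powr p"
    using assms \<open>q * (p - 1) = p\<close> by (simp add: powr_mult powr_powr mult.commute)
  ultimately show ?thesis
    using assms by (simp add: powr_divide mult.assoc)
qed

text \<open>Optimizing the scale in Young's inequality.\<close>

lemma le_powr_mult_powr_of_scaled_bounds:
  fixes A B X p q :: real
  assumes pq: "p > 1" "q > 1" "1/p + 1/q = 1" and A: "A > 0" and B: "B \<ge> 0"
    and bound: "\<And>lam. lam > 0 \<Longrightarrow> X \<le> lam powr q * A / q + B / (lam powr p * p)"
  shows "X \<le> A powr (1/q) * B powr (1/p)"
proof (cases "B = 0")
  case True
  have "X \<le> 0 + \<epsilon>" if "0 < \<epsilon>" for \<epsilon>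
  proof -
    define lam where "lam = (\<epsilon> * q / A) powr (1/q)"
    have "lam > 0" using that pq A by (simp add: lam_def)
    have "lam powr q = \<epsilon> * q / A" using that pq A by (simp add: lam_def powr_powr)
    then have "lam powr q * A / q = \<epsilon>" using pq A by simp
    then show ?thesis using bound[OF \<open>lam > 0\<close>] True by simp
  qed
  then show ?thesis using True by (simp add: field_le_epsilon)
next
  case False
  define lam where "lam = (B/A) powr (1/(p*q))"
  define a1 where "a1 = A powr (1/p)"
  define a2 where "a2 = A powr (1/q)"
  define b1 where "b1 = B powr (1/p)"
  define b2 where "b2 = B powr (1/q)"
  have pos: "a1 > 0" "a2 > 0" "b1 > 0" "b2 > 0"
    using A B False by (simp_all add: a1_def a2_def b1_def b2_def)
  have "A = a1 * a2" "B = b1 * b2"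
    using A B pq(3) by (simp_all add: a1_def a2_def b1_def b2_def powr_add[symmetric])
  have "lam > 0" using A B False by (simp add: lam_def)
  have "lam powr q = b1 / a1" "lam powr p = b2 / a2"
    using pq A B by (simp_all add: lam_def powr_powr powr_divide a1_def a2_def b1_def b2_def)
  then have "lam powr q * A / q + B / (lam powr p * p) = (b1 / a1) * (a1 * a2) / q + (b1 * b2) / ((b2 / a2) * p)"
    using \<open>A = a1 * a2\<close> \<open>B = b1 * b2\<close> by simp
  also have "\<dots> = a2 * b1 * (1/q + 1/p)"
    using pos pq by (simp add: field_simps)
  also have "\<dots> = A powr (1/q) * B powr (1/p)"
    using pq(3) by (simp add: a2_def b1_def add.commute)
  finally show ?thesis using bound[OF \<open>lam > 0\<close>] by simp
qed

lemma set_borel_measurable_iff_restrict_space: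
  "S \<in> sets M \<Longrightarrow> set_borel_measurable M S f \<longleftrightarrow> f \<in> borel_measurable (restrict_space M S)"
  for f :: "'a \<Rightarrow> real"
  unfolding set_borel_measurable_def by (subst borel_measurable_restrict_space_iff) auto

lemma set_integral_Holder_powr_pred:
  fixes f g w :: "'a \<Rightarrow> real"
  assumes pq: "p > 1" "q > 1" "1/p + 1/q = 1"
    and meas: "set_borel_measurable M S (\<lambda>x. \<bar>f x\<bar> powr (p - 1) * \<bar>g x\<bar> * w x)"
    and w: "\<And>x. x \<in> S \<Longrightarrow> 0 \<le> w x"
    and int_f: "set_integrable M S (\<lambda>x. \<bar>f x\<bar> powr p * w x)"
    and int_g: "set_integrable M S (\<lambda>x. \<bar>g x\<bar> powr p * w x)"
    and pos: "0 < (LINT x:S|M. \<bar>f x\<bar> powr p * w x)"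
  shows "set_integrable M S (\<lambda>x. \<bar>f x\<bar> powr (p - 1) * \<bar>g x\<bar> * w x)"
    and "(LINT x:S|M. \<bar>f x\<bar> powr (p - 1) * \<bar>g x\<bar> * w x)
           \<le> (LINT x:S|M. \<bar>f x\<bar> powr p * w x) powr (1 / q) * (LINT x:S|M. \<bar>g x\<bar> powr p * w x) powr (1 / p)"
proof -
  define h where "h x = \<bar>f x\<bar> powr (p - 1) * \<bar>g x\<bar> * w x" for x
  define majorant where
    "majorant lam x = lam powr q / q * (\<bar>f x\<bar> powr p * w x) + 1 / (lam powr p * p) * (\<bar>g x\<bar> powr p * w x)"
    for lam x
  have h_le: "h x \<le> majorant lam x" if "x \<in> S" "lam > 0" for x lam
    using mult_right_mono[OF young_scaled[OF pq \<open>lam > 0\<close>, of "\<bar>f x\<bar>" "\<bar>g x\<bar>"] w[OF \<open>x \<in> S\<close>]]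
    by (simp add: h_def majorant_def algebra_simps)
  have int_majorant: "set_integrable M S (majorant lam)" for lam
    unfolding majorant_def using int_f int_g by (intro set_integral_add) auto
  have int_h: "set_integrable M S h"
  proof (rule set_integrable_bound[OF int_majorant])
    show "set_borel_measurable M S h" using meas by (simp add: h_def[abs_def])
    show "AE x in M. x \<in> S \<longrightarrow> norm (h x) \<le> norm (majorant 1 x)"
    proof (intro AE_I2 impI)
      fix x
      assume "x \<in> S"
      then have "0 \<le> h x" "h x \<le> majorant 1 x"
        using h_le[of x 1] w by (simp_all add: h_def)
      then show "norm (h x) \<le> norm (majorant 1 x)" by simp
    qed
  qed
  have "(LINT x:S|M. h x) \<le> lam powr q * (LINT x:S|M. \<bar>f x\<bar> powr p * w x) / q
          + (LINT x:S|M. \<bar>g x\<bar> powr p * w x) / (lam powr p * p)" if "lam > 0" for lam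
  proof -
    have "(LINT x:S|M. h x) \<le> (LINT x:S|M. majorant lam x)"
      using h_le that by (intro set_integral_mono int_h int_majorant)
    then show ?thesis using int_f int_g by (simp add: majorant_def)
  qed
  then have "(LINT x:S|M. h x) \<le> (LINT x:S|M. \<bar>f x\<bar> powr p * w x) powr (1 / q)
                                  * (LINT x:S|M. \<bar>g x\<bar> powr p * w x) powr (1 / p)"
    using w by (intro le_powr_mult_powr_of_scaled_bounds[OF pq pos] set_integral_nonneg) auto
  with int_h show "set_integrable M S (\<lambda>x. \<bar>f x\<bar> powr (p - 1) * \<bar>g x\<bar> * w x)"
    and "(LINT x:S|M. \<bar>f x\<bar> powr (p - 1) * \<bar>g x\<bar> * w x)
           \<le> (LINT x:S|M. \<bar>f x\<bar> powr p * w x) powr (1 / q) * (LINT x:S|M. \<bar>g x\<bar> powr p * w x) powr (1 / p)"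
    by (simp_all add: h_def[abs_def])
qed

lemma set_integral_Holder_abs_powr_pred:
  fixes f g w :: "'a \<Rightarrow> real"
  assumes p: "p \<ge> 1" and S: "S \<in> sets M"
    and meas: "set_borel_measurable M S f" "set_borel_measurable M S g" "set_borel_measurable M S w"
    and w: "\<And>x. x \<in> S \<Longrightarrow> 0 \<le> w x"
    and int_f: "set_integrable M S (\<lambda>x. \<bar>f x\<bar> powr p * w x)"
    and int_g: "set_integrable M S (\<lambda>x. \<bar>g x\<bar> powr p * w x)"
    and pos: "0 < (LINT x:S|M. \<bar>f x\<bar> powr p * w x)"
  shows "set_integrable M S (\<lambda>x. abs_powr_pred p (f x) * \<bar>g x\<bar> * w x)" (is ?int)
    and "(LINT x:S|M. abs_powr_pred p (f x) * \<bar>g x\<bar> * w x)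
           \<le> (LINT x:S|M. \<bar>f x\<bar> powr p * w x) powr ((p - 1) / p)
             * (LINT x:S|M. \<bar>g x\<bar> powr p * w x) powr (1 / p)" (is ?le)
proof (atomize (full), cases "p = 1")
  case True
  then show "?int \<and> ?le"
    using int_g pos by (simp add: abs_powr_pred_def)
next
  case False
  have [measurable]: "f \<in> borel_measurable (restrict_space M S)" "g \<in> borel_measurable (restrict_space M S)"
    "w \<in> borel_measurable (restrict_space M S)"
    using meas set_borel_measurable_iff_restrict_space[OF S] by auto
  have "(\<lambda>x. \<bar>f x\<bar> powr (p - 1) * \<bar>g x\<bar> * w x) \<in> borel_measurable (restrict_space M S)"
    by measurable
  then have "set_borel_measurable M S (\<lambda>x. \<bar>f x\<bar> powr (p - 1) * \<bar>g x\<bar> * w x)"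
    using set_borel_measurable_iff_restrict_space[OF S] by auto
  moreover have "p > 1" "p / (p - 1) > 1" "1/p + 1/(p / (p - 1)) = 1" "1 / (p / (p - 1)) = (p - 1) / p"
    using p False by (simp_all add: field_simps)
  ultimately show "?int \<and> ?le"
    using set_integral_Holder_powr_pred[of p "p / (p - 1)" M S f g w] False w int_f int_g pos
    by (simp add: abs_powr_pred_def)
qed

section \<open>Consequences of integrability against the weight\<close>

lemma set_integral_mono_subset:
  fixes F :: "'a \<Rightarrow> real"
  assumes "set_integrable M S F" "T \<in> sets M" "T \<subseteq> S" "\<And>x. x \<in> S \<Longrightarrow> 0 \<le> F x"
  shows "(LINT x:T|M. F x) \<le> (LINT x:S|M. F x)"
  unfolding set_lebesgue_integral_def
proof (rule integral_mono)
  show "integrable M (\<lambda>x. indicator T x *\<^sub>R F x)"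
    using set_integrable_subset[OF assms(1-3)] by (simp add: set_integrable_def)
  show "integrable M (\<lambda>x. indicator S x *\<^sub>R F x)"
    using assms(1) by (simp add: set_integrable_def)
  show "indicator T x *\<^sub>R F x \<le> indicator S x *\<^sub>R F x" for x
    using assms(3,4) by (auto simp: indicator_def)
qed

lemma mult_length_le_set_integral:
  fixes F :: "real \<Rightarrow> real"
  assumes "set_integrable lborel S F" "S \<in> sets lborel" "{\<alpha>..\<beta>} \<subseteq> S" "\<alpha> \<le> \<beta>"
    and "\<And>x. x \<in> S \<Longrightarrow> 0 \<le> F x" and lower: "\<And>x. x \<in> {\<alpha>..\<beta>} \<Longrightarrow> c \<le> F x"
  shows "c * (\<beta> - \<alpha>) \<le> (LINT x:S|lborel. F x)"
proof -
  have "c * (\<beta> - \<alpha>) = (LINT x:{\<alpha>..\<beta>}|lborel. c)"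
    using assms(4) by (simp add: set_integral_const)
  also have "\<dots> \<le> (LINT x:{\<alpha>..\<beta>}|lborel. F x)"
    using lower set_integrable_subset[OF assms(1) _ assms(3)]
    by (intro set_integral_mono) (auto intro: borel_integrable_atLeastAtMost')
  also have "\<dots> \<le> (LINT x:S|lborel. F x)"
    by (rule set_integral_mono_subset[OF assms(1) _ assms(3,5)]) simp
  finally show ?thesis .
qed

lemma continuous_nonneg_eq_0_if_set_integral_eq_0:
  fixes F :: "real \<Rightarrow> real"
  assumes int: "set_integrable lborel S F" and S: "open S" and F: "continuous_on S F"
    and nonneg: "\<And>x. x \<in> S \<Longrightarrow> 0 \<le> F x" and zero: "(LINT x:S|lborel. F x) = 0"
    and "x0 \<in> S"
  shows "F x0 = 0"
proof (rule ccontr)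
  assume "F x0 \<noteq> 0"
  then have "F x0 > 0" using nonneg[OF \<open>x0 \<in> S\<close>] by simp
  obtain d where d: "d > 0" "\<And>x. \<bar>x - x0\<bar> < d \<Longrightarrow> \<bar>F x - F x0\<bar> \<le> F x0 / 2"
    using continuous_on_open_delta[OF F S \<open>x0 \<in> S\<close>, of "F x0 / 2"] \<open>F x0 > 0\<close> by auto
  obtain r where r: "r > 0" "ball x0 r \<subseteq> S" using S \<open>x0 \<in> S\<close> openE by blast
  define \<beta> where "\<beta> = x0 + min d r / 2"
  have "{x0..\<beta>} \<subseteq> ball x0 r" "x0 < \<beta>" "\<beta> - x0 < d"
    using d(1) r(1) by (auto simp: \<beta>_def dist_real_def)
  have "F x0 / 2 * (\<beta> - x0) \<le> (LINT x:S|lborel. F x)"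
  proof (rule mult_length_le_set_integral[OF int])
    fix x
    assume "x \<in> {x0..\<beta>}"
    then have "\<bar>F x - F x0\<bar> \<le> F x0 / 2" using d(2) \<open>\<beta> - x0 < d\<close> by simp
    then show "F x0 / 2 \<le> F x" by linarith
  qed (use S r \<open>x0 < \<beta>\<close> \<open>{x0..\<beta>} \<subseteq> ball x0 r\<close> nonneg in auto)
  moreover have "0 < F x0 / 2 * (\<beta> - x0)" using \<open>F x0 > 0\<close> \<open>x0 < \<beta>\<close> by simp
  ultimately show False using zero by linarith
qed

lemma Lp_sinh_obtain_small:
  fixes v :: "real \<Rightarrow> real"
  assumes v: "Lp_sinh p N v" and p: "p > 0" and \<epsilon>: "0 < \<epsilon>"
  obtains T where "T \<ge> t" "\<bar>v T\<bar> < \<epsilon>"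
proof -
  have "\<exists>T\<ge>t. \<bar>v T\<bar> < \<epsilon>"
  proof (rule ccontr)
    assume none: "\<not> (\<exists>T\<ge>t. \<bar>v T\<bar> < \<epsilon>)"
    have large: "\<epsilon> \<le> \<bar>v T\<bar>" if "T \<ge> t" for T using none that by force
    define t1 where "t1 = max t 1"
    define c where "c = \<epsilon> powr p * sinh t1 ^ (N - 1)"
    define A where "A = (LINT x:{0<..}|lborel. \<bar>v x\<bar> powr p * sinh x ^ (N - 1))"
    have "t1 \<ge> t" "t1 > 0" "c > 0" using \<epsilon> by (auto simp: t1_def c_def)
    define \<beta> where "\<beta> = t1 + (\<bar>A\<bar>/c + 1)"
    have "c * (\<beta> - t1) \<le> A"
      unfolding A_def
    proof (rule mult_length_le_set_integral)
      show "set_integrable lborel {0<..} (\<lambda>x. \<bar>v x\<bar> powr p * sinh x ^ (N - 1))"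
        using v by (simp add: Lp_sinh_def)
      fix x
      assume "x \<in> {t1..\<beta>}"
      then have "x \<ge> t" "x \<ge> t1" using \<open>t1 \<ge> t\<close> by auto
      then have "\<epsilon> powr p \<le> \<bar>v x\<bar> powr p" "sinh t1 ^ (N - 1) \<le> sinh x ^ (N - 1)"
        using large[of x] \<epsilon> p \<open>t1 > 0\<close> by (auto intro!: powr_mono2 power_mono)
      then show "c \<le> \<bar>v x\<bar> powr p * sinh x ^ (N - 1)"
        unfolding c_def using \<open>t1 > 0\<close> by (intro mult_mono) auto
    qed (use \<open>t1 > 0\<close> \<open>c > 0\<close> in \<open>auto simp: \<beta>_def\<close>)
    moreover have "c * (\<beta> - t1) = \<bar>A\<bar> + c" using \<open>c > 0\<close> by (simp add: \<beta>_def field_simps)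
    ultimately show False using \<open>c > 0\<close> by linarith
  qed
  then show ?thesis using that by blast
qed

lemma set_integral_Icc_mult_sinh_le:
  fixes F :: "real \<Rightarrow> real"
  assumes int_Icc: "set_integrable lborel {t..T} F"
    and int: "set_integrable lborel {0<..} (\<lambda>x. F x * sinh x ^ (N - 1))"
    and t: "0 < t" and nonneg: "\<And>x. 0 < x \<Longrightarrow> 0 \<le> F x"
  shows "(LINT x:{t..T}|lborel. F x) * sinh t ^ (N - 1) \<le> (LINT x:{0<..}|lborel. F x * sinh x ^ (N - 1))"
proof -
  have "(LINT x:{t..T}|lborel. F x) * sinh t ^ (N - 1) = (LINT x:{t..T}|lborel. F x * sinh t ^ (N - 1))"
    by simp
  also have "\<dots> \<le> (LINT x:{t..T}|lborel. F x * sinh x ^ (N - 1))"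
  proof (rule set_integral_mono)
    show "set_integrable lborel {t..T} (\<lambda>x. F x * sinh t ^ (N - 1))"
      using int_Icc by simp
    show "set_integrable lborel {t..T} (\<lambda>x. F x * sinh x ^ (N - 1))"
      by (rule set_integrable_subset[OF int]) (use t in auto)
    fix x
    assume "x \<in> {t..T}"
    then show "F x * sinh t ^ (N - 1) \<le> F x * sinh x ^ (N - 1)"
      using t nonneg[of x] by (auto intro!: mult_left_mono power_mono)
  qed
  also have "\<dots> \<le> (LINT x:{0<..}|lborel. F x * sinh x ^ (N - 1))"
    using t nonneg by (intro set_integral_mono_subset[OF int]) auto
  finally show ?thesis .
qed

lemma abs_powr_mult_sinh_le:
  fixes v v' :: "real \<Rightarrow> real"
  assumes p: "p \<ge> 1" and v: "continuous_on {0<..} v" and wd: "weak_deriv v v'"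
    and Lv: "Lp_sinh p N v"
    and int: "set_integrable lborel {0<..} (\<lambda>x. abs_powr_pred p (v x) * \<bar>v' x\<bar> * sinh x ^ (N - 1))"
    and t: "0 < t"
  shows "\<bar>v t\<bar> powr p * sinh t ^ (N - 1)
           \<le> p * (LINT x:{0<..}|lborel. abs_powr_pred p (v x) * \<bar>v' x\<bar> * sinh x ^ (N - 1))"
proof -
  define X where "X = (LINT x:{0<..}|lborel. abs_powr_pred p (v x) * \<bar>v' x\<bar> * sinh x ^ (N - 1))"
  define W where "W = sinh t ^ (N - 1)"
  have "W > 0" using t by (simp add: W_def)
  have v': "loc_int v'" using wd unfolding weak_deriv_def by blast
  have bound: "\<bar>v t\<bar> powr p * W \<le> \<bar>v T\<bar> powr p * W + p * X" if "t \<le> T" for T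
  proof -
    define I where "I = (LINT r:{t..T}|lborel. abs_powr_pred p (v r) * \<bar>v' r\<bar>)"
    have "I * W \<le> X"
      unfolding I_def W_def X_def using abs_powr_pred_nonneg t
      by (intro set_integral_Icc_mult_sinh_le int
            loc_int_continuous_mult_abs[OF v' continuous_on_abs_powr_pred[OF p v]]) auto
    have "\<bar>v t\<bar> powr p \<le> \<bar>v T\<bar> powr p + p * I"
      unfolding I_def using abs_powr_le_integral[OF p v v' weak_deriv_increment_le[OF wd v] t that] .
    then have "\<bar>v t\<bar> powr p * W \<le> (\<bar>v T\<bar> powr p + p * I) * W"
      using \<open>W > 0\<close> by (intro mult_right_mono) auto
    also have "\<dots> = \<bar>v T\<bar> powr p * W + p * (I * W)"
      by (simp add: algebra_simps)
    also have "\<dots> \<le> \<bar>v T\<bar> powr p * W + p * X"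
      using \<open>I * W \<le> X\<close> p by simp
    finally show ?thesis .
  qed
  have "\<bar>v t\<bar> powr p * W \<le> p * X + \<delta>" if "\<delta> > 0" for \<delta>
  proof -
    have "p > 0" "0 < (\<delta> / W) powr (1/p)" using p \<open>\<delta> > 0\<close> \<open>W > 0\<close> by auto
    then obtain T where T: "T \<ge> t" "\<bar>v T\<bar> < (\<delta> / W) powr (1/p)"
      by (rule Lp_sinh_obtain_small[OF Lv])
    then have "\<bar>v T\<bar> powr p \<le> ((\<delta> / W) powr (1/p)) powr p"
      using \<open>p > 0\<close> by (intro powr_mono2) auto
    also have "\<dots> = \<delta> / W" using \<open>p > 0\<close> \<open>\<delta> > 0\<close> \<open>W > 0\<close> by (simp add: powr_powr)
    finally have "\<bar>v T\<bar> powr p * W \<le> \<delta>" using \<open>W > 0\<close> by (simp add: pos_le_divide_eq)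
    then show ?thesis using bound[OF T(1)] by linarith
  qed
  then have "\<bar>v t\<bar> powr p * W \<le> p * X" by (rule field_le_epsilon)
  then show ?thesis by (simp add: X_def W_def)
qed

lemma Lp_sinh_eq_0_if_integral_eq_0:
  fixes v :: "real \<Rightarrow> real"
  assumes p: "p \<ge> 1" and v: "continuous_on {0<..} v" and Lv: "Lp_sinh p N v"
    and zero: "(LINT x:{0<..}|lborel. \<bar>v x\<bar> powr p * sinh x ^ (N - 1)) = 0" and t: "0 < t"
  shows "v t = 0"
proof -
  have "\<bar>v t\<bar> powr p * sinh t ^ (N - 1) = 0"
  proof (rule continuous_nonneg_eq_0_if_set_integral_eq_0[OF _ open_greaterThan _ _ zero])
    show "set_integrable lborel {0<..} (\<lambda>x. \<bar>v x\<bar> powr p * sinh x ^ (N - 1))"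
      using Lv by (simp add: Lp_sinh_def)
    show "continuous_on {0<..} (\<lambda>x. \<bar>v x\<bar> powr p * sinh x ^ (N - 1))"
      by (intro continuous_intros continuous_on_abs_powr[OF p v])
  qed (use t in auto)
  then show ?thesis using t by simp
qed

lemma le_of_powr_mult_le:
  fixes p x A B s :: real and N :: nat
  assumes p: "p \<ge> 1" and "0 \<le> x" "0 \<le> A" "0 \<le> B" "0 < s" "N \<ge> 1"
    and le: "x powr p * s ^ (N - 1) \<le> p * (A powr ((p - 1) / p) * B powr (1 / p))"
  shows "x \<le> p powr (1 / p) * (A powr (1 / p)) powr ((p - 1) / p) * (B powr (1 / p)) powr (1 / p)
               * s powr ((1 - real N) / p)"
proof -
  have "s ^ (N - 1) = s powr (real N - 1)"
    using powr_realpow[OF \<open>0 < s\<close>, of "N - 1"] \<open>N \<ge> 1\<close> by (simp add: of_nat_diff)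
  then have inv: "1 / s ^ (N - 1) = s powr (1 - real N)"
    using powr_minus_divide[of s "real N - 1"] by simp
  have "x powr p \<le> p * A powr ((p - 1) / p) * B powr (1 / p) / s ^ (N - 1)"
    using le \<open>0 < s\<close> by (simp add: pos_le_divide_eq mult.assoc)
  also have "\<dots> = p * A powr ((p - 1) / p) * B powr (1 / p) * s powr (1 - real N)"
    using inv by (metis times_divide_eq_right mult.right_neutral)
  finally have "(x powr p) powr (1 / p) \<le> (p * A powr ((p - 1) / p) * B powr (1 / p) * s powr (1 - real N)) powr (1 / p)"
    using p by (intro powr_mono2) auto
  also have "\<dots> = p powr (1 / p) * (A powr ((p - 1) / p)) powr (1 / p) * (B powr (1 / p)) powr (1 / p)
                   * s powr ((1 - real N) / p)"
    by (simp add: powr_mult powr_powr)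
  also have "(A powr ((p - 1) / p)) powr (1 / p) = (A powr (1 / p)) powr ((p - 1) / p)"
    by (simp add: powr_powr mult.commute)
  finally show ?thesis using p \<open>0 \<le> x\<close> by (simp add: powr_powr)
qed

lemma W1p_sinh_abs_powr_mult_sinh_le:
  fixes v v' :: "real \<Rightarrow> real"
  assumes p: "p \<ge> 1" and W: "W1p_sinh p N v v'" and v: "continuous_on {0<..} v"
    and pos: "0 < (LINT x:{0<..}|lborel. \<bar>v x\<bar> powr p * sinh x ^ (N - 1))" and t: "0 < t"
  shows "\<bar>v t\<bar> powr p * sinh t ^ (N - 1)
           \<le> p * ((LINT x:{0<..}|lborel. \<bar>v x\<bar> powr p * sinh x ^ (N - 1)) powr ((p - 1) / p)
                 * (LINT x:{0<..}|lborel. \<bar>v' x\<bar> powr p * sinh x ^ (N - 1)) powr (1 / p))"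
proof -
  have Lv: "Lp_sinh p N v" and Lv': "Lp_sinh p N v'" and wd: "weak_deriv v v'"
    using W unfolding W1p_sinh_def by auto
  have "continuous_on {0<..} (\<lambda>x::real. sinh x ^ (N - 1))"
    by (intro continuous_intros)
  then have "set_borel_measurable lborel {0<..} (\<lambda>x::real. sinh x ^ (N - 1))"
    unfolding set_borel_measurable_def measurable_lborel2
    by (rule borel_measurable_continuous_on_indicator[rotated]) simp
  with Lv Lv' pos have Holder:
    "set_integrable lborel {0<..} (\<lambda>x. abs_powr_pred p (v x) * \<bar>v' x\<bar> * sinh x ^ (N - 1))"
    "(LINT x:{0<..}|lborel. abs_powr_pred p (v x) * \<bar>v' x\<bar> * sinh x ^ (N - 1))
       \<le> (LINT x:{0<..}|lborel. \<bar>v x\<bar> powr p * sinh x ^ (N - 1)) powr ((p - 1) / p)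
         * (LINT x:{0<..}|lborel. \<bar>v' x\<bar> powr p * sinh x ^ (N - 1)) powr (1 / p)"
    unfolding Lp_sinh_def by (auto intro!: set_integral_Holder_abs_powr_pred[OF p])
  show ?thesis
    using abs_powr_mult_sinh_le[OF p v wd Lv Holder(1) t] mult_left_mono[OF Holder(2), of p] p
    by linarith
qed

theorem lemma6p3:
  fixes p :: real and N :: nat and v v' :: "real \<Rightarrow> real"
  assumes "p \<ge> 1" and "N \<ge> 1"
    and "W1p_sinh p N v v'"
    and "continuous_on {0<..} v"
  shows "\<forall>t>0. \<bar>v t\<bar> \<le> p powr (1 / p) * Lp_sinh_norm p N v powr ((p - 1) / p)
                      * Lp_sinh_norm p N v' powr (1 / p) * sinh t powr ((1 - real N) / p)"
proof (intro allI impI)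
  fix t :: real
  assume "t > 0"
  define A where "A = (LINT x:{0<..}|lborel. \<bar>v x\<bar> powr p * sinh x ^ (N - 1))"
  define B where "B = (LINT x:{0<..}|lborel. \<bar>v' x\<bar> powr p * sinh x ^ (N - 1))"
  have "A \<ge> 0" "B \<ge> 0" unfolding A_def B_def by (auto intro!: set_integral_nonneg)
  have "\<bar>v t\<bar> powr p * sinh t ^ (N - 1) \<le> p * (A powr ((p - 1) / p) * B powr (1 / p))"
  proof (cases "A = 0")
    case True
    have "Lp_sinh p N v" using assms(3) unfolding W1p_sinh_def by blast
    with True have "v t = 0"
      using Lp_sinh_eq_0_if_integral_eq_0[OF assms(1,4) _ _ \<open>t > 0\<close>] by (simp add: A_def)
    then show ?thesis using assms(1) by simp
  next
    case False
    then show ?thesis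
      using W1p_sinh_abs_powr_mult_sinh_le[OF assms(1,3,4) _ \<open>t > 0\<close>] \<open>A \<ge> 0\<close>
      by (simp add: A_def B_def)
  qed
  then show "\<bar>v t\<bar> \<le> p powr (1 / p) * Lp_sinh_norm p N v powr ((p - 1) / p)
               * Lp_sinh_norm p N v' powr (1 / p) * sinh t powr ((1 - real N) / p)"
    using le_of_powr_mult_le[OF assms(1) _ \<open>A \<ge> 0\<close> \<open>B \<ge> 0\<close> _ assms(2)] \<open>t > 0\<close>
    by (simp add: Lp_sinh_norm_def A_def B_def)
qed

end
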